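(* Let $(A,C,k)$ be an instance and $W$ an affordable committee. Then every CC-completion of $W$ has representation ratio at least $\frac34$.
   Context: An instance $(A,C,k)$ consists of a finite nonempty candidate set $C$, voters $N=\{1,\dots,n\}$, approval sets $A_i\subseteq C$, and a committee size $1\le k\le|C|$. A committee is $W\subseteq C$ with $|W|\le k$. $\mathrm{cov}(W)=|\{i: A_i\cap W\ne\emptyset\}|$; the representation ratio is $\mathrm{cov}(W)/\max\{\mathrm{cov}(W'):|W'|=k\}$. A CC-completion of $W$ is $W\cup T$ with $T\subseteq C\setminus W$, $|T|=k-|W|$, maximizing $\mathrm{cov}(W\cup T)$. $W$ is affordable if there are $p_i:C\to\mathbb{R}_{\ge0}$ ($i\in N$) with $p_i(c)=0$ for $c\notin A_i$, $\sum_c p_i(c)\le k/n$, $\sum_i p_i(c)=1$ for $c\in W$, $\sum_i p_i(c)=0$ for $c\notin W$. *)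

theory Defs
  imports Complex_Main
begin

definition cov :: "nat \<Rightarrow> (nat \<Rightarrow> 'c set) \<Rightarrow> 'c set \<Rightarrow> nat" where
  "cov n A W = card {i \<in> {1..n}. A i \<inter> W \<noteq> {}}"

definition is_instance :: "'c set \<Rightarrow> nat \<Rightarrow> (nat \<Rightarrow> 'c set) \<Rightarrow> nat \<Rightarrow> bool" where
  "is_instance C n A k \<longleftrightarrow> finite C \<and> C \<noteq> {} \<and> n \<ge> 1 \<and> (\<forall>i\<in>{1..n}. A i \<subseteq> C)
     \<and> 1 \<le> k \<and> k \<le> card C"

definition committee :: "'c set \<Rightarrow> nat \<Rightarrow> 'c set \<Rightarrow> bool" where
  "committee C k W \<longleftrightarrow> W \<subseteq> C \<and> card W \<le> k"

definition opt_cov :: "'c set \<Rightarrow> nat \<Rightarrow> (nat \<Rightarrow> 'c set) \<Rightarrow> nat \<Rightarrow> nat" where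
  "opt_cov C n A k = Max {cov n A W' | W'. W' \<subseteq> C \<and> card W' = k}"

definition CC_completion :: "'c set \<Rightarrow> nat \<Rightarrow> (nat \<Rightarrow> 'c set) \<Rightarrow> nat \<Rightarrow> 'c set \<Rightarrow> 'c set \<Rightarrow> bool" where
  "CC_completion C n A k W W2 \<longleftrightarrow>
     (\<exists>T. T \<subseteq> C - W \<and> card T = k - card W \<and> W2 = W \<union> T \<and>
        (\<forall>T'. T' \<subseteq> C - W \<and> card T' = k - card W \<longrightarrow> cov n A (W \<union> T') \<le> cov n A (W \<union> T)))"

definition affordable :: "'c set \<Rightarrow> nat \<Rightarrow> (nat \<Rightarrow> 'c set) \<Rightarrow> nat \<Rightarrow> 'c set \<Rightarrow> bool" where
  "affordable C n A k W \<longleftrightarrow>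
     (\<exists>p :: nat \<Rightarrow> 'c \<Rightarrow> real.
        (\<forall>i\<in>{1..n}. \<forall>c\<in>C. p i c \<ge> 0) \<and>
        (\<forall>i\<in>{1..n}. \<forall>c\<in>C. c \<notin> A i \<longrightarrow> p i c = 0) \<and>
        (\<forall>i\<in>{1..n}. (\<Sum>c\<in>C. p i c) \<le> real k / real n) \<and>
        (\<forall>c\<in>W. (\<Sum>i\<in>{1..n}. p i c) = 1) \<and>
        (\<forall>c\<in>C - W. (\<Sum>i\<in>{1..n}. p i c) = 0))"

end

theory Submission
  imports Defs
begin

text \<open>Let \<open>w = card W\<close> and let \<open>X\<close> be an optimal committee. Under an affordable payment
  scheme the \<open>w\<close> units paid for \<open>W\<close> come from the voters covered by \<open>W\<close>, each paying at most
  \<open>k / n\<close>, so \<open>cov W \<ge> (w / k) n \<ge> (w / k) cov X\<close>. Charge every voter covered by \<open>X\<close> but not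
  by \<open>W\<close> to one of its approved candidates in \<open>X\<close>; the \<open>k - w\<close> candidates of \<open>X\<close> with the
  largest charges carry at least a \<open>(k - w) / k\<close> fraction of these voters, so some completion,
  and hence every CC-completion \<open>W2\<close>, satisfies \<open>cov W2 \<ge> t cov W + (1 - t) cov X\<close> with
  \<open>t = w / k\<close>. Together, \<open>cov W2 \<ge> (t\<^sup>2 - t + 1) cov X \<ge> 3/4 cov X\<close>.\<close>

lemma card_eq_sum_card_fibres:
  assumes "finite U" "finite S" "g ` U \<subseteq> S"
  shows "card U = (\<Sum>c\<in>S. card {i \<in> U. g i = c})"
  using sum.group[OF assms, of "\<lambda>_. 1::nat"] by simp

lemma exists_remove_sum_ge_average:
  fixes f :: "'a \<Rightarrow> nat"
  assumes "finite T" "T \<noteq> {}"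
  shows "\<exists>x\<in>T. (card T - 1) * sum f T \<le> card T * sum f (T - {x})"
proof -
  have "Min (f ` T) \<in> f ` T" using assms by simp
  then obtain x where x: "x \<in> T" "f x = Min (f ` T)" by auto
  then have "card T * f x \<le> sum f T"
    using assms(1) sum_bounded_below[of T "f x" f] by simp
  moreover have "(card T - 1) * sum f T + sum f T = card T * sum f T"
    using assms by (cases "card T") simp_all
  moreover have "sum f T = f x + sum f (T - {x})"
    using assms(1) x(1) by (simp add: sum.remove)
  ultimately have "(card T - 1) * sum f T \<le> card T * sum f (T - {x})"
    by (metis add_le_cancel_right add_mult_distrib2 add.commute add_le_mono1)
  with x(1) show ?thesis ..
qed

text \<open>Delete elements of minimal weight one at a time.\<close>
lemma exists_subset_sum_ge_average:
  fixes f :: "'a \<Rightarrow> nat"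
  assumes "finite S" "j \<le> card S"
  shows "\<exists>T\<subseteq>S. card T = j \<and> j * sum f S \<le> card S * sum f T"
  using assms(2)
proof (induction "card S - j" arbitrary: j)
  case 0
  then show ?case by (intro exI[of _ S]) auto
next
  case (Suc d)
  then have "d = card S - (j + 1)" "j + 1 \<le> card S" by auto
  then obtain T where T: "T \<subseteq> S" "card T = j + 1" "(j + 1) * sum f S \<le> card S * sum f T"
    using Suc.hyps(1)[of "j + 1"] by blast
  have "finite T" using T(1) assms(1) finite_subset by blast
  moreover have "T \<noteq> {}" using T(2) by auto
  ultimately obtain x where x: "x \<in> T" "j * sum f T \<le> (j + 1) * sum f (T - {x})"
    using exists_remove_sum_ge_average[of T f] T(2) by auto
  have "(j + 1) * (j * sum f S) = j * ((j + 1) * sum f S)" by (simp add: algebra_simps)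
  also have "\<dots> \<le> j * (card S * sum f T)" using T(3) by simp
  also have "\<dots> = card S * (j * sum f T)" by simp
  also have "\<dots> \<le> card S * ((j + 1) * sum f (T - {x}))" using x(2) by simp
  also have "\<dots> = (j + 1) * (card S * sum f (T - {x}))" by (simp add: algebra_simps)
  finally have "j * sum f S \<le> card S * sum f (T - {x})"
    using mult_le_cancel1[of "j + 1"] by simp
  moreover have "card (T - {x}) = j" using T(2) x(1) \<open>finite T\<close> by simp
  ultimately show ?case using T(1) by (intro exI[of _ "T - {x}"]) auto
qed

lemma cov_le: "cov n A X \<le> n"
proof -
  have "cov n A X \<le> card {1..n}" unfolding cov_def by (rule card_mono) auto
  then show ?thesis by simp
qed

lemma cov_mono: "X \<subseteq> Y \<Longrightarrow> cov n A X \<le> cov n A Y"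
  unfolding cov_def by (rule card_mono) auto

definition newly_covered :: "nat \<Rightarrow> (nat \<Rightarrow> 'c set) \<Rightarrow> 'c set \<Rightarrow> 'c set \<Rightarrow> nat set" where
  "newly_covered n A W S = {i \<in> {1..n}. A i \<inter> W = {} \<and> A i \<inter> S \<noteq> {}}"

lemma cov_Un: "cov n A (W \<union> S) = cov n A W + card (newly_covered n A W S)"
proof -
  have "{i \<in> {1..n}. A i \<inter> (W \<union> S) \<noteq> {}} =
      {i \<in> {1..n}. A i \<inter> W \<noteq> {}} \<union> newly_covered n A W S"
    unfolding newly_covered_def by auto
  then show ?thesis
    unfolding cov_def by (simp add: card_Un_disjoint newly_covered_def disjoint_iff)
qed

lemma exists_subset_newly_covered_ge_average:
  assumes "finite X" "j \<le> card X"
  shows "\<exists>S\<subseteq>X. card S = j \<and>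
    j * card (newly_covered n A W X) \<le> card X * card (newly_covered n A W S)"
proof -
  define U where "U = newly_covered n A W X"
  define a where "a i = (SOME c. c \<in> A i \<inter> X)" for i
  have a: "a i \<in> A i \<inter> X" if "i \<in> U" for i
  proof -
    have "\<exists>c. c \<in> A i \<inter> X" using that unfolding U_def newly_covered_def by auto
    then show ?thesis unfolding a_def by (rule someI_ex)
  qed
  define f where "f c = card {i \<in> U. a i = c}" for c
  have "finite U" unfolding U_def newly_covered_def by simp
  moreover have "a ` U \<subseteq> X" using a by auto
  ultimately have sum_f: "sum f X = card U"
    using card_eq_sum_card_fibres[of U X a] assms(1) unfolding f_def by simp
  obtain S where S: "S \<subseteq> X" "card S = j" "j * sum f X \<le> card X * sum f S"
    using exists_subset_sum_ge_average[OF assms] by blast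
  have "sum f S = card {i \<in> U. a i \<in> S}"
  proof -
    have "finite S" using S(1) assms(1) finite_subset by blast
    then have "card {i \<in> U. a i \<in> S} = (\<Sum>c\<in>S. card {i \<in> {i \<in> U. a i \<in> S}. a i = c})"
      using \<open>finite U\<close> by (intro card_eq_sum_card_fibres) auto
    also have "\<dots> = sum f S" unfolding f_def by (intro sum.cong refl arg_cong[where f = card]) auto
    finally show ?thesis by simp
  qed
  also have "\<dots> \<le> card (newly_covered n A W S)"
    using a by (intro card_mono) (auto simp: newly_covered_def U_def)
  finally have "sum f S \<le> card (newly_covered n A W S)" .
  then have "card X * sum f S \<le> card X * card (newly_covered n A W S)"
    by (rule mult_le_mono2)
  moreover have "j * card U \<le> card X * sum f S" using S(3) sum_f by simp
  ultimately have "j * card U \<le> card X * card (newly_covered n A W S)" by (rule le_trans[rotated])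
  with S(1,2) U_def show ?thesis by blast
qed

lemma exists_completion_ge_convex_combination:
  assumes "finite C" "W \<subseteq> C" "card W \<le> k" "X \<subseteq> C" "card X = k"
  shows "\<exists>T. T \<subseteq> C - W \<and> card T = k - card W \<and>
    card W * cov n A W + (k - card W) * cov n A X \<le> k * cov n A (W \<union> T)"
proof -
  have "finite X" using assms(1,4) finite_subset by blast
  moreover have "k - card W \<le> card X" using assms(5) by simp
  ultimately obtain S where S: "S \<subseteq> X" "card S = k - card W"
    "(k - card W) * card (newly_covered n A W X) \<le> card X * card (newly_covered n A W S)"
    using exists_subset_newly_covered_ge_average[of X "k - card W" n A W] by auto
  have "finite S" using S(1) \<open>finite X\<close> finite_subset by blast
  then have "card (S - W) \<le> k - card W" using S(2) card_mono[of S "S - W"] by simp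
  moreover have "k - card W \<le> card (C - W)"
    using card_mono[OF assms(1,4)] assms(2,5) finite_subset[OF assms(2,1)]
    by (simp add: card_Diff_subset)
  ultimately obtain T where T: "S - W \<subseteq> T" "T \<subseteq> C - W" "card T = k - card W"
    using exists_subset_between[of "S - W" "k - card W" "C - W"] S(1) assms(1,4) by blast
  have "cov n A X \<le> cov n A W + card (newly_covered n A W X)"
    using cov_mono[of X "W \<union> X" n A] cov_Un[of n A W X] by simp
  from mult_le_mono2[OF this, of "k - card W"]
  have "(k - card W) * cov n A X \<le>
      (k - card W) * cov n A W + (k - card W) * card (newly_covered n A W X)"
    by (simp add: add_mult_distrib2)
  moreover have "card W * cov n A W + (k - card W) * cov n A W = k * cov n A W"
    using assms(3) by (simp add: add_mult_distrib[symmetric])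
  ultimately have "card W * cov n A W + (k - card W) * cov n A X \<le>
      k * cov n A W + (k - card W) * card (newly_covered n A W X)"
    by linarith
  also have "\<dots> \<le> k * cov n A (W \<union> S)"
    using S(3) assms(5) cov_Un[of n A W S] by (simp add: algebra_simps)
  also have "\<dots> \<le> k * cov n A (W \<union> T)"
    using T(1) cov_mono[of "W \<union> S" "W \<union> T" n A] by auto
  finally show ?thesis using T(2,3) by blast
qed

lemma CC_completion_ge_convex_combination:
  assumes "CC_completion C n A k W W2" "finite C" "W \<subseteq> C" "card W \<le> k" "X \<subseteq> C" "card X = k"
  shows "card W * cov n A W + (k - card W) * cov n A X \<le> k * cov n A W2"
proof -
  obtain T where T: "T \<subseteq> C - W" "card T = k - card W"
    "card W * cov n A W + (k - card W) * cov n A X \<le> k * cov n A (W \<union> T)"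
    using exists_completion_ge_convex_combination[OF assms(2-6)] by blast
  have "cov n A (W \<union> T) \<le> cov n A W2"
    using assms(1) T(1,2) unfolding CC_completion_def by blast
  with T(3) show ?thesis by (meson le_trans mult_le_mono2)
qed

lemma affordable_card_mult_le_cov:
  fixes C W :: "'c set"
  assumes "finite C" "W \<subseteq> C" "n \<ge> 1" "affordable C n A k W"
  shows "card W * n \<le> cov n A W * k"
proof -
  obtain p :: "nat \<Rightarrow> 'c \<Rightarrow> real" where
    nonneg: "\<forall>i\<in>{1..n}. \<forall>c\<in>C. p i c \<ge> 0" and
    approved: "\<forall>i\<in>{1..n}. \<forall>c\<in>C. c \<notin> A i \<longrightarrow> p i c = 0" and
    budget: "\<forall>i\<in>{1..n}. (\<Sum>c\<in>C. p i c) \<le> real k / real n" and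
    paid: "\<forall>c\<in>W. (\<Sum>i\<in>{1..n}. p i c) = 1"
    using assms(4) unfolding affordable_def by blast
  define V where "V = {i \<in> {1..n}. A i \<inter> W \<noteq> {}}"
  have "real (card W) = (\<Sum>c\<in>W. \<Sum>i\<in>{1..n}. p i c)" using paid by simp
  also have "\<dots> = (\<Sum>i\<in>{1..n}. \<Sum>c\<in>W. p i c)" by (rule sum.swap)
  also have "\<dots> = (\<Sum>i\<in>V. \<Sum>c\<in>W. p i c)"
    using approved assms(2) by (intro sum.mono_neutral_right) (auto simp: V_def intro!: sum.neutral)
  also have "\<dots> \<le> (\<Sum>i\<in>V. real k / real n)"
  proof (rule sum_mono)
    fix i assume "i \<in> V"
    then have "i \<in> {1..n}" unfolding V_def by simp
    then have "(\<Sum>c\<in>W. p i c) \<le> (\<Sum>c\<in>C. p i c)"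
      using assms(1,2) nonneg by (intro sum_mono2) auto
    with budget \<open>i \<in> {1..n}\<close> show "(\<Sum>c\<in>W. p i c) \<le> real k / real n" by force
  qed
  also have "\<dots> = real (cov n A W) * real k / real n" unfolding V_def cov_def by simp
  finally have "real (card W) * real n \<le> real (cov n A W) * real k"
    using assms(3) by (simp add: field_simps)
  then show ?thesis by (simp flip: of_nat_mult)
qed

lemma opt_cov_attained:
  assumes "finite C" "k \<le> card C"
  shows "\<exists>X\<subseteq>C. card X = k \<and> opt_cov C n A k = cov n A X"
proof -
  define M where "M = {cov n A X | X. X \<subseteq> C \<and> card X = k}"
  have "M \<subseteq> {0..n}" unfolding M_def using cov_le by auto
  then have "finite M" by (rule finite_subset) simp
  moreover obtain X where "X \<subseteq> C" "card X = k" by (rule obtain_subset_with_card_n[OF assms(2)])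
  then have "M \<noteq> {}" unfolding M_def by blast
  ultimately have "Max M \<in> M" by (rule Max_in)
  then show ?thesis unfolding M_def opt_cov_def by auto
qed

lemma three_quarters_of_convex_combination:
  fixes k w x y z :: real
  assumes "0 < k" "0 \<le> w" "0 \<le> y" "w * y \<le> k * x" "w * x + (k - w) * y \<le> k * z"
  shows "3 * y \<le> 4 * z"
proof -
  have "w * (w * y) + k * ((k - w) * y) \<le> k * (k * z)"
  proof -
    have "w * (w * y) \<le> w * (k * x)" using assms(2,4) by (rule mult_left_mono[rotated])
    moreover have "k * (w * x + (k - w) * y) \<le> k * (k * z)" using assms(1,5) by simp
    ultimately show ?thesis by (simp add: algebra_simps)
  qed
  moreover have "3 * (k * k) * y \<le> 4 * (w * (w * y) + k * ((k - w) * y))"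
  proof -
    have "0 \<le> (2 * w - k)\<^sup>2 * y" using assms(3) by simp
    then show ?thesis by (simp add: power2_eq_square algebra_simps)
  qed
  ultimately have "(k * k) * (3 * y) \<le> (k * k) * (4 * z)" by (simp add: algebra_simps)
  then show ?thesis using assms(1) by simp
qed

theorem corollary3:
  fixes C :: "'c set" and n k :: nat and A :: "nat \<Rightarrow> 'c set" and W W2 :: "'c set"
  assumes "is_instance C n A k"
    and "committee C k W"
    and "affordable C n A k W"
    and "CC_completion C n A k W W2"
  shows "4 * cov n A W2 \<ge> 3 * opt_cov C n A k"
proof -
  have C: "finite C" "n \<ge> 1" "1 \<le> k" "k \<le> card C"
    using assms(1) unfolding is_instance_def by auto
  have W: "W \<subseteq> C" "card W \<le> k" using assms(2) unfolding committee_def by auto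
  obtain X where X: "X \<subseteq> C" "card X = k" "opt_cov C n A k = cov n A X"
    using opt_cov_attained[OF C(1,4)] by blast
  have "card W * cov n A W + (k - card W) * cov n A X \<le> k * cov n A W2"
    using CC_completion_ge_convex_combination[OF assms(4) C(1) W X(1,2)] .
  then have convex: "real (card W) * real (cov n A W) + (real k - real (card W)) * real (cov n A X)
      \<le> real k * real (cov n A W2)"
    using W(2) by (simp flip: of_nat_mult of_nat_add of_nat_diff)
  have "card W * cov n A X \<le> card W * n" using cov_le[of n A X] by simp
  also have "\<dots> \<le> k * cov n A W"
    using affordable_card_mult_le_cov[OF C(1) W(1) C(2) assms(3)] by (simp add: mult.commute)
  finally have "real (card W) * real (cov n A X) \<le> real k * real (cov n A W)"
    by (simp flip: of_nat_mult)
  with convex C(3) have "3 * real (cov n A X) \<le> 4 * real (cov n A W2)"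
    by (intro three_quarters_of_convex_combination) auto
  with X(3) show ?thesis by linarith
qed

end
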